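(* Let $P$ be a finite nonempty set of points lying in a single quadrant $Q$ with respect to the origin $s$, and let $e\ne s$ be such that the line $\overline{se}$ is in the quadrant $Q$ but lies outside the two bounding lines, i.e. $\theta_{s,e}>\theta_{ub}$ or $\theta_{s,e}<\theta_{lb}$. Then, with $d^{\max}=\max_{p\in P} d(p,\overline{se})$, $$d^{\max} \ge \max\Big\{ \min\{d(l_1,\overline{se}),d(l_2,\overline{se})\},\ \min\{d(u_1,\overline{se}),d(u_2,\overline{se})\},\ D\Big\},$$ where $D = d(c_n,\overline{se})$ if $d(s,e) < d(s,c_f)$ and $D = d(c_f,\overline{se})$ if $d(s,e)\ge d(s,c_f)$; and $$d^{\max} \le \max\{ d(l_1,\overline{se}),d(l_2,\overline{se}),d(u_1,\overline{se}),d(u_2,\overline{se}),\ d(c_f,\overline{se})\}.$$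
   Context: Bounded Quadrant System (BQS) setup. Points are in the plane with UTM-projected $x$ and $y$ axes, and the start point $s$ is taken as the origin. For a point $p\ne s$, $\theta(p)\in[0,2\pi)$ is the angle between the positive $x$ axis and the vector from $s$ to $p$; $\theta_{s,e}=\theta(e)$. The four quadrants are $Q_k=\{p\neq s: (k-1)\pi/2 \le \theta(p) < k\pi/2\}$, $k=1,\dots,4$; quadrant $Q_k$ has angle range $[\theta^Q_{start},\theta^Q_{end}) = [(k-1)\pi/2,k\pi/2)$. A line $\overline{se}$ is "in" quadrant $Q$ if $\theta^Q_{start}\le \theta_{s,e}<\theta^Q_{end}$. For a finite nonempty $P\subset Q$: the bounding box is the smallest closed axis-parallel rectangle containing $P$, with corners $c_1,\dots,c_4$; $c_n$ and $c_f$ are the corners of the box nearest to and farthest from the origin $s$ (e.g. in the first quadrant $c_n=(x_{\min},y_{\min})$, $c_f=(x_{\max},y_{\max})$). $\theta_{lb}=\min_{p\in P}\theta(p)$ and $\theta_{ub}=\max_{p\in P}\theta(p)$; the lower (resp. upper) bounding line is the ray from $s$ at angle $\theta_{lb}$ (resp. $\theta_{ub}$). $l_1,l_2$ are the intersection points of the lower bounding line with the boundary of the bounding box and $u_1,u_2$ those of the upper bounding line, with index 1 the intersection nearer to $s$ (they may coincide). $d(p,\overline{se})$ is the Euclidean distance from the point $p$ to the line segment from $s$ to $e$. *)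

theory Defs
  imports "HOL-Analysis.Analysis"
begin

type_synonym pt = "real \<times> real"

text \<open>Start point s is the origin (0,0). Angle theta(p) in [0,2pi).\<close>
definition theta :: "pt \<Rightarrow> real" where
  "theta p = Arg2pi (Complex (fst p) (snd p))"

definition quadrant :: "nat \<Rightarrow> pt set" where
  "quadrant k = {p. p \<noteq> 0 \<and> (real k - 1) * pi / 2 \<le> theta p \<and> theta p < real k * pi / 2}"

definition dseg :: "pt \<Rightarrow> pt \<Rightarrow> real" where
  "dseg p e = infdist p (closed_segment 0 e)"

definition xmin :: "pt set \<Rightarrow> real" where "xmin P = Min (fst ` P)"
definition xmax :: "pt set \<Rightarrow> real" where "xmax P = Max (fst ` P)"
definition ymin :: "pt set \<Rightarrow> real" where "ymin P = Min (snd ` P)"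
definition ymax :: "pt set \<Rightarrow> real" where "ymax P = Max (snd ` P)"

definition bbox :: "pt set \<Rightarrow> pt set" where
  "bbox P = {(x, y). xmin P \<le> x \<and> x \<le> xmax P \<and> ymin P \<le> y \<and> y \<le> ymax P}"

definition corners :: "pt set \<Rightarrow> pt set" where
  "corners P = {(x, y). x \<in> {xmin P, xmax P} \<and> y \<in> {ymin P, ymax P}}"

definition nearest :: "pt set \<Rightarrow> pt" where
  "nearest S = (SOME c. c \<in> S \<and> (\<forall>c'\<in>S. norm c \<le> norm c'))"
definition farthest :: "pt set \<Rightarrow> pt" where
  "farthest S = (SOME c. c \<in> S \<and> (\<forall>c'\<in>S. norm c' \<le> norm c))"

definition c_n :: "pt set \<Rightarrow> pt" where "c_n P = nearest (corners P)"
definition c_f :: "pt set \<Rightarrow> pt" where "c_f P = farthest (corners P)"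

definition theta_lb :: "pt set \<Rightarrow> real" where "theta_lb P = Min (theta ` P)"
definition theta_ub :: "pt set \<Rightarrow> real" where "theta_ub P = Max (theta ` P)"

definition ray :: "real \<Rightarrow> pt set" where
  "ray t = {r *\<^sub>R (cos t, sin t) | r. r \<ge> 0}"

text \<open>Intersection points of the bounding lines with the boundary of the box;
  index 1 = nearer to s, index 2 = farther (they may coincide).\<close>
definition l1 :: "pt set \<Rightarrow> pt" where "l1 P = nearest (ray (theta_lb P) \<inter> frontier (bbox P))"
definition l2 :: "pt set \<Rightarrow> pt" where "l2 P = farthest (ray (theta_lb P) \<inter> frontier (bbox P))"
definition u1 :: "pt set \<Rightarrow> pt" where "u1 P = nearest (ray (theta_ub P) \<inter> frontier (bbox P))"
definition u2 :: "pt set \<Rightarrow> pt" where "u2 P = farthest (ray (theta_ub P) \<inter> frontier (bbox P))"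

end

theory Submission
  imports Defs
begin

text \<open>A rotation by a multiple of a quarter turn maps the quadrant onto the first one and
  preserves distances, bounding boxes and the angular order, so it suffices to treat points with
  \<open>x > 0\<close>, \<open>y \<ge> 0\<close> and a segment \<open>se\<close> in the closed first quadrant lying on one side of
  all of \<open>P\<close>. The distance to the convex set \<open>se\<close> is convex along segments, so on a segment it is
  bounded by its values at the endpoints, and it vanishes at \<open>s\<close>.

  Lower bounds: \<open>l\<^sub>1\<close> lies between \<open>s\<close> and the point of \<open>P\<close> on the lower bounding line, hence is
  not farther from \<open>se\<close> than that point; likewise \<open>u\<^sub>1\<close>. The corner \<open>c\<^sub>n\<close>, and \<open>c\<^sub>f\<close> when
  \<open>|se| \<ge> |sc\<^sub>f|\<close>, is reached from a point of \<open>P\<close> on an edge of the box by sliding along that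
  edge towards \<open>se\<close>, which does not increase the distance. Upper bound: every \<open>p \<in> P\<close> lies
  between \<open>s\<close> and the point where its ray leaves the box; that exit point lies on the right or the
  top edge, between \<open>l\<^sub>2\<close> or \<open>u\<^sub>2\<close> and \<open>c\<^sub>f\<close>.\<close>

section \<open>Distance to a segment\<close>

lemma infdist_closed_segment_le_max:
  fixes S :: "'a::euclidean_space set"
  assumes S: "convex S" "closed S" "S \<noteq> {}" and x: "x \<in> closed_segment u v"
  shows "infdist x S \<le> max (infdist u S) (infdist v S)"
proof -
  obtain pu where pu: "pu \<in> S" "infdist u S = dist u pu"
    using infdist_attains_inf[OF S(2,3)] by blast
  obtain pv where pv: "pv \<in> S" "infdist v S = dist v pv"
    using infdist_attains_inf[OF S(2,3)] by blast
  obtain t where t: "0 \<le> t" "t \<le> 1" "x = (1 - t) *\<^sub>R u + t *\<^sub>R v"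
    using x by (auto simp: in_segment)
  define w where "w = (1 - t) *\<^sub>R pu + t *\<^sub>R pv"
  have "w \<in> S"
    unfolding w_def using convexD_alt[OF S(1) pu(1) pv(1) t(1,2)] by simp
  have "x - w = (1 - t) *\<^sub>R (u - pu) + t *\<^sub>R (v - pv)"
    unfolding w_def t(3) by (simp add: algebra_simps)
  hence "dist x w \<le> (1 - t) * dist u pu + t * dist v pv"
    using t(1,2) norm_triangle_ineq[of "(1 - t) *\<^sub>R (u - pu)" "t *\<^sub>R (v - pv)"]
    by (simp add: dist_norm)
  also have "\<dots> \<le> (1 - t) * max (infdist u S) (infdist v S) + t * max (infdist u S) (infdist v S)"
    using t(1,2) pu pv by (intro add_mono mult_left_mono) auto
  also have "\<dots> = max (infdist u S) (infdist v S)"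
    by (simp add: algebra_simps)
  finally show ?thesis
    using \<open>w \<in> S\<close> infdist_le order_trans by blast
qed

lemma dseg_closed_segment_le_max:
  "x \<in> closed_segment u v \<Longrightarrow> dseg x e \<le> max (dseg u e) (dseg v e)"
  unfolding dseg_def by (rule infdist_closed_segment_le_max) auto

lemma dseg_nonneg: "0 \<le> dseg p e"
  unfolding dseg_def by (rule infdist_nonneg)

lemma dseg_eq_0: "p \<in> closed_segment 0 e \<Longrightarrow> dseg p e = 0"
  unfolding dseg_def by (rule infdist_zero)

lemma dseg_le_dist: "w \<in> closed_segment 0 e \<Longrightarrow> dseg p e \<le> dist p w"
  unfolding dseg_def by (rule infdist_le)

lemma scaleR_in_closed_segment_0:
  "0 \<le> c \<Longrightarrow> c \<le> 1 \<Longrightarrow> c *\<^sub>R e \<in> closed_segment 0 e"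
  by (auto simp: in_segment)

lemma dseg_scaleR_le:
  assumes "0 \<le> c" "c \<le> 1"
  shows "dseg (c *\<^sub>R p) e \<le> dseg p e"
proof -
  have "dseg (c *\<^sub>R p) e \<le> max (dseg 0 e) (dseg p e)"
    by (intro dseg_closed_segment_le_max scaleR_in_closed_segment_0 assms)
  thus ?thesis
    using dseg_eq_0[of 0 e] dseg_nonneg[of p e] by simp
qed

lemma fst_diff_le_dseg:
  assumes "0 \<le> fst e"
  shows "fst p - fst e \<le> dseg p e"
proof -
  have "closed (closed_segment 0 e)" "closed_segment 0 e \<noteq> {}"
    by auto
  then obtain w where w: "w \<in> closed_segment 0 e" "dseg p e = dist p w"
    using infdist_attains_inf unfolding dseg_def by blast
  then obtain t where "0 \<le> t" "t \<le> 1" "w = t *\<^sub>R e"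
    by (auto simp: in_segment)
  hence "fst w \<le> fst e"
    using assms by (simp add: mult_left_le_one_le)
  moreover have "fst p - fst w \<le> dist p w"
    using dist_fst_le[of p w] by (simp add: dist_real_def)
  ultimately show ?thesis
    using w by linarith
qed

lemma dseg_linear_isometry:
  assumes "linear T" "\<And>x. norm (T x) = norm x"
  shows "dseg (T p) (T e) = dseg p e"
proof -
  have "closed_segment 0 (T e) = T ` closed_segment 0 e"
    using closed_segment_linear_image[OF assms(1), of 0 e] linear_0[OF assms(1)] by simp
  moreover have "dist (T p) (T w) = dist p w" for w
    using assms by (simp add: dist_norm flip: linear_diff)
  ultimately show ?thesis
    unfolding dseg_def infdist_def by (simp add: image_image)
qed

lemma dseg_swap: "dseg (prod.swap p) (prod.swap e) = dseg p e"
  by (rule dseg_linear_isometry) (auto intro: linearI simp: norm_Pair add.commute)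

lemma snd_diff_le_dseg: "0 \<le> snd e \<Longrightarrow> snd p - snd e \<le> dseg p e"
  using fst_diff_le_dseg[of "prod.swap e" "prod.swap p"] by (simp add: dseg_swap)

lemma Pair_in_closed_segment_fst:
  "x \<in> closed_segment a b \<Longrightarrow> (x, y) \<in> closed_segment (a, y) (b, y)"
  by (auto simp: in_segment algebra_simps)

lemma Pair_in_closed_segment_snd:
  "y \<in> closed_segment a b \<Longrightarrow> (x, y) \<in> closed_segment (x, a) (x, b)"
  by (auto simp: in_segment algebra_simps)

definition cross :: "pt \<Rightarrow> pt \<Rightarrow> real" where
  "cross p q = fst p * snd q - snd p * fst q"

text \<open>On the horizontal line through \<open>(x, y)\<close> the distance to \<open>se\<close> attains its minimum at a point
  left of \<open>(x, y)\<close>: where the line meets \<open>se\<close>, or at \<open>(ex, y)\<close> if the line passes above \<open>e\<close>.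
  Convexity along the line then gives monotonicity to the right of that point.\<close>

lemma dseg_le_slide_right:
  fixes x y x' ex ey :: real
  assumes e: "0 \<le> ex" "0 \<le> ey" and "0 \<le> y" "cross (x, y) (ex, ey) > 0" "x \<le> x'"
  shows "dseg (x, y) (ex, ey) \<le> dseg (x', y) (ex, ey)"
proof -
  have below: "y * ex < x * ey"
    using assms(4) by (simp add: cross_def)
  moreover have "0 \<le> y * ex"
    using e \<open>0 \<le> y\<close> by simp
  ultimately have "0 < ey"
    using e by (cases "ey = 0") auto
  show ?thesis
  proof (cases "y \<le> ey")
    case True
    define w where "w = (y * ex / ey, y)"
    have "w = (y / ey) *\<^sub>R (ex, ey)"
      using \<open>0 < ey\<close> by (simp add: w_def)
    also have "\<dots> \<in> closed_segment 0 (ex, ey)"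
      using True \<open>0 < ey\<close> \<open>0 \<le> y\<close> by (intro scaleR_in_closed_segment_0) auto
    finally have "dseg w (ex, ey) = 0"
      by (rule dseg_eq_0)
    have "y * ex / ey \<le> x"
      using below \<open>0 < ey\<close> by (simp add: field_simps)
    hence "(x, y) \<in> closed_segment w (x', y)"
      unfolding w_def using \<open>x \<le> x'\<close>
      by (intro Pair_in_closed_segment_fst) (simp add: closed_segment_eq_real_ivl)
    from dseg_closed_segment_le_max[OF this, of "(ex, ey)"] show ?thesis
      using \<open>dseg w (ex, ey) = 0\<close> dseg_nonneg by simp
  next
    case False
    have "dseg (ex, y) (ex, ey) \<le> dist (ex, y) (ex, ey)"
      by (rule dseg_le_dist) auto
    also have "\<dots> \<le> dseg (x', y) (ex, ey)"
      using False snd_diff_le_dseg[of "(ex, ey)" "(x', y)"] e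
      by (simp add: dist_Pair_Pair dist_real_def)
    finally have corner: "dseg (ex, y) (ex, ey) \<le> dseg (x', y) (ex, ey)" .
    have "ey * ex \<le> y * ex"
      using False e by (simp add: mult_right_mono)
    hence "ey * ex < ey * x"
      using below by (simp add: mult.commute)
    hence "ex \<le> x"
      using \<open>0 < ey\<close> by simp
    hence "(x, y) \<in> closed_segment (ex, y) (x', y)"
      using \<open>x \<le> x'\<close> by (intro Pair_in_closed_segment_fst) (simp add: closed_segment_eq_real_ivl)
    from dseg_closed_segment_le_max[OF this, of "(ex, ey)"] show ?thesis
      using corner by simp
  qed
qed

text \<open>The same argument on the vertical line; if it passes right of \<open>e\<close>, then \<open>inside\<close> forces
  \<open>y \<le> ey\<close>, so \<open>(x, ey)\<close> lies above \<open>(x, y)\<close>.\<close>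

lemma dseg_le_slide_down:
  fixes x y y' ex ey :: real
  assumes e: "0 \<le> ex" "0 \<le> ey" and "0 \<le> x" "y' \<le> y" "cross (x, y) (ex, ey) > 0"
    and inside: "x\<^sup>2 + y\<^sup>2 \<le> ex\<^sup>2 + ey\<^sup>2"
  shows "dseg (x, y) (ex, ey) \<le> dseg (x, y') (ex, ey)"
proof -
  have below: "y * ex < x * ey"
    using assms(5) by (simp add: cross_def)
  show ?thesis
  proof (cases "x \<le> ex")
    case True
    hence "0 < ex"
      using below e \<open>0 \<le> x\<close> by (cases "ex = 0") auto
    define w where "w = (x, x * ey / ex)"
    have "w = (x / ex) *\<^sub>R (ex, ey)"
      using \<open>0 < ex\<close> by (simp add: w_def)
    also have "\<dots> \<in> closed_segment 0 (ex, ey)"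
      using True \<open>0 < ex\<close> \<open>0 \<le> x\<close> by (intro scaleR_in_closed_segment_0) auto
    finally have "dseg w (ex, ey) = 0"
      by (rule dseg_eq_0)
    have "y \<le> x * ey / ex"
      using below \<open>0 < ex\<close> by (simp add: field_simps)
    hence "(x, y) \<in> closed_segment (x, y') w"
      unfolding w_def using \<open>y' \<le> y\<close>
      by (intro Pair_in_closed_segment_snd) (simp add: closed_segment_eq_real_ivl)
    from dseg_closed_segment_le_max[OF this, of "(ex, ey)"] show ?thesis
      using \<open>dseg w (ex, ey) = 0\<close> dseg_nonneg by simp
  next
    case False
    have "dseg (x, ey) (ex, ey) \<le> dist (x, ey) (ex, ey)"
      by (rule dseg_le_dist) auto
    also have "\<dots> \<le> dseg (x, y') (ex, ey)"
      using False fst_diff_le_dseg[of "(ex, ey)" "(x, y')"] e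
      by (simp add: dist_Pair_Pair dist_real_def)
    finally have corner: "dseg (x, ey) (ex, ey) \<le> dseg (x, y') (ex, ey)" .
    have "ex\<^sup>2 < x\<^sup>2"
      using False e by (simp add: power_strict_mono)
    hence "y \<le> ey"
      using inside e by (smt (verit) power2_less_imp_less)
    hence "(x, y) \<in> closed_segment (x, y') (x, ey)"
      using \<open>y' \<le> y\<close> by (intro Pair_in_closed_segment_snd) (simp add: closed_segment_eq_real_ivl)
    from dseg_closed_segment_le_max[OF this, of "(ex, ey)"] show ?thesis
      using corner by simp
  qed
qed

section \<open>Half-lines, bounding boxes and extremal points\<close>

definition halfline :: "pt \<Rightarrow> pt set" where
  "halfline a = (\<lambda>t. t *\<^sub>R a) ` {0..}"

definition is_nearest :: "pt set \<Rightarrow> pt \<Rightarrow> bool" where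
  "is_nearest S c \<longleftrightarrow> c \<in> S \<and> (\<forall>c'\<in>S. norm c \<le> norm c')"

definition is_farthest :: "pt set \<Rightarrow> pt \<Rightarrow> bool" where
  "is_farthest S c \<longleftrightarrow> c \<in> S \<and> (\<forall>c'\<in>S. norm c' \<le> norm c)"

lemma is_nearest_nearest:
  assumes "compact S" "S \<noteq> {}"
  shows "is_nearest S (nearest S)"
proof -
  obtain x where "x \<in> S" "\<forall>y\<in>S. norm x \<le> norm y"
    using continuous_attains_inf[OF assms continuous_on_norm_id] by blast
  hence "\<exists>c. c \<in> S \<and> (\<forall>c'\<in>S. norm c \<le> norm c')"
    by blast
  from someI_ex[OF this] show ?thesis
    unfolding is_nearest_def nearest_def .
qed

lemma is_farthest_farthest:
  assumes "compact S" "S \<noteq> {}"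
  shows "is_farthest S (farthest S)"
proof -
  obtain x where "x \<in> S" "\<forall>y\<in>S. norm y \<le> norm x"
    using continuous_attains_sup[OF assms continuous_on_norm_id] by blast
  hence "\<exists>c. c \<in> S \<and> (\<forall>c'\<in>S. norm c' \<le> norm c)"
    by blast
  from someI_ex[OF this] show ?thesis
    unfolding is_farthest_def farthest_def .
qed

lemma closed_halfline: "a \<noteq> 0 \<Longrightarrow> closed (halfline a)"
  unfolding halfline_def
  by (intro closed_injective_linear_image closed_atLeast)
     (auto intro: linearI simp: algebra_simps inj_def)

lemma scaleR_in_frontier_below:
  fixes S :: "'a::real_normed_vector set"
  assumes "0 \<notin> S" "0 \<le> t0" "t0 *\<^sub>R a \<in> S"
  obtains t where "0 \<le> t" "t \<le> t0" "t *\<^sub>R a \<in> frontier S"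
proof -
  have "closed_segment 0 (t0 *\<^sub>R a) \<inter> frontier S \<noteq> {}"
    by (rule connected_Int_frontier) (use assms in auto)
  then obtain u where u: "0 \<le> u" "u \<le> 1" "(u * t0) *\<^sub>R a \<in> frontier S"
    by (auto simp: in_segment)
  moreover have "u * t0 \<le> t0"
    using u assms(2) by (simp add: mult_left_le_one_le)
  ultimately show ?thesis
    using that assms(2) by (meson mult_nonneg_nonneg)
qed

lemma scaleR_in_frontier_above:
  fixes S :: "'a::real_normed_vector set"
  assumes "bounded S" "a \<noteq> 0" "0 \<le> t0" "t0 *\<^sub>R a \<in> S"
  obtains t where "t0 \<le> t" "t *\<^sub>R a \<in> frontier S"
proof -
  obtain B where B: "\<forall>x\<in>S. norm x \<le> B"
    using assms(1) bounded_iff by blast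
  define M where "M = t0 + (\<bar>B\<bar> + 1) / norm a"
  have "t0 \<le> M"
    using assms(2) by (simp add: M_def)
  have "\<bar>B\<bar> + 1 \<le> M * norm a"
    using assms(2,3) by (simp add: M_def field_simps)
  hence "M *\<^sub>R a \<notin> S"
    using B \<open>t0 \<le> M\<close> assms(3) by force
  hence "closed_segment (t0 *\<^sub>R a) (M *\<^sub>R a) \<inter> frontier S \<noteq> {}"
    by (intro connected_Int_frontier) (use assms in auto)
  then obtain u where u: "0 \<le> u" "u \<le> 1"
    and "(1 - u) *\<^sub>R (t0 *\<^sub>R a) + u *\<^sub>R (M *\<^sub>R a) \<in> frontier S"
    by (auto simp: in_segment)
  moreover have "(1 - u) *\<^sub>R (t0 *\<^sub>R a) + u *\<^sub>R (M *\<^sub>R a) = ((1 - u) * t0 + u * M) *\<^sub>R a"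
    by (simp add: algebra_simps)
  moreover have "t0 \<le> (1 - u) * t0 + u * M"
    using u \<open>t0 \<le> M\<close> mult_right_mono[of t0 M u] by (simp add: algebra_simps)
  ultimately show ?thesis
    using that by metis
qed

lemma inj_linear_isometry:
  assumes "linear T" "\<And>x. norm (T x) = norm x"
  shows "inj T"
  using assms linear_inj_iff_eq_0 norm_eq_zero by metis

lemma frontier_linear_isometry_image:
  fixes T :: "'a::euclidean_space \<Rightarrow> 'a"
  assumes "linear T" "\<And>x. norm (T x) = norm x"
  shows "frontier (T ` S) = T ` frontier S"
proof -
  have "inj T"
    using assms by (rule inj_linear_isometry)
  thus ?thesis
    unfolding frontier_def
    using closure_injective_linear_image[OF assms(1)] interior_injective_linear_image[OF assms(1)]
    by (simp add: image_set_diff)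
qed

lemma halfline_linear_image: "linear T \<Longrightarrow> halfline (T a) = T ` halfline a"
  unfolding halfline_def by (auto simp: image_image linear_scale)

lemma is_nearest_isometry_image:
  "(\<And>x. norm (T x) = norm x) \<Longrightarrow> is_nearest S c \<Longrightarrow> is_nearest (T ` S) (T c)"
  unfolding is_nearest_def by auto

lemma is_farthest_isometry_image:
  "(\<And>x. norm (T x) = norm x) \<Longrightarrow> is_farthest S c \<Longrightarrow> is_farthest (T ` S) (T c)"
  unfolding is_farthest_def by auto

lemma mem_bbox:
  "q \<in> bbox P \<longleftrightarrow> xmin P \<le> fst q \<and> fst q \<le> xmax P \<and> ymin P \<le> snd q \<and> snd q \<le> ymax P"
  by (cases q) (simp add: bbox_def)

lemma bbox_eq_Times: "bbox P = {xmin P..xmax P} \<times> {ymin P..ymax P}"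
  by (auto simp: bbox_def)

lemma corners_eq_Times: "corners P = {xmin P, xmax P} \<times> {ymin P, ymax P}"
  by (auto simp: corners_def)

lemma compact_bbox: "compact (bbox P)"
  unfolding bbox_eq_Times by (intro compact_Times compact_Icc)

lemma subset_bbox: "finite P \<Longrightarrow> P \<subseteq> bbox P"
  unfolding bbox_eq_Times xmin_def xmax_def ymin_def ymax_def
  by (auto simp: mem_Times_iff intro!: Min_le Max_ge) force+

section \<open>Quarter turns\<close>

definition quarter_turn :: "pt \<Rightarrow> pt" where
  "quarter_turn p = (snd p, - fst p)"

lemma linear_quarter_turn: "linear quarter_turn"
  unfolding quarter_turn_def by (intro linearI) auto

lemma norm_quarter_turn: "norm (quarter_turn p) = norm p"
  unfolding quarter_turn_def by (cases p) (simp add: norm_Pair add.commute)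

lemma cross_quarter_turn: "cross (quarter_turn p) (quarter_turn q) = cross p q"
  unfolding quarter_turn_def cross_def by (simp add: algebra_simps)

lemma quarter_turn_polar:
  "quarter_turn (r *\<^sub>R (cos t, sin t)) = r *\<^sub>R (cos (t - pi / 2), sin (t - pi / 2))"
  unfolding quarter_turn_def by (simp add: cos_diff sin_diff)

lemma quarter_turn_image_Times: "quarter_turn ` (A \<times> B) = B \<times> uminus ` A"
  unfolding quarter_turn_def by force

lemma bbox_quarter_turn_image:
  assumes "finite P" "P \<noteq> {}"
  shows "bbox (quarter_turn ` P) = quarter_turn ` bbox P"
    and "corners (quarter_turn ` P) = quarter_turn ` corners P"
proof -
  have "fst ` quarter_turn ` P = snd ` P" "snd ` quarter_turn ` P = uminus ` fst ` P"
    by (simp_all add: image_image quarter_turn_def)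
  hence "xmin (quarter_turn ` P) = ymin P" "xmax (quarter_turn ` P) = ymax P"
    "ymin (quarter_turn ` P) = - xmax P" "ymax (quarter_turn ` P) = - xmin P"
    unfolding xmin_def xmax_def ymin_def ymax_def using assms by simp_all
  thus "bbox (quarter_turn ` P) = quarter_turn ` bbox P"
    and "corners (quarter_turn ` P) = quarter_turn ` corners P"
    unfolding bbox_eq_Times corners_eq_Times quarter_turn_image_Times by auto
qed

lemma quarter_turns_linear_isometry:
  fixes n :: nat
  shows "linear (quarter_turn ^^ n)"
    and "norm ((quarter_turn ^^ n) p) = norm p"
    and "cross ((quarter_turn ^^ n) p) ((quarter_turn ^^ n) q) = cross p q"
  by (induction n arbitrary: p q)
     (simp_all add: linear_id linear_compose linear_quarter_turn norm_quarter_turn cross_quarter_turn)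

lemma quarter_turns_polar:
  "(quarter_turn ^^ n) (r *\<^sub>R (cos t, sin t)) = r *\<^sub>R (cos (t - n * pi / 2), sin (t - n * pi / 2))"
proof (induction n)
  case (Suc n)
  have "t - real (Suc n) * pi / 2 = (t - n * pi / 2) - pi / 2"
    by (simp add: algebra_simps add_divide_distrib)
  thus ?case
    by (simp only: funpow.simps comp_apply Suc.IH quarter_turn_polar)
qed simp

lemma bbox_quarter_turns_image:
  assumes "finite P" "P \<noteq> {}"
  shows "bbox ((quarter_turn ^^ n) ` P) = (quarter_turn ^^ n) ` bbox P"
    and "corners ((quarter_turn ^^ n) ` P) = (quarter_turn ^^ n) ` corners P"
proof (induction n)
  case (Suc n)
  have "finite ((quarter_turn ^^ n) ` P)" "(quarter_turn ^^ n) ` P \<noteq> {}"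
    using assms by auto
  note turn = bbox_quarter_turn_image[OF this]
  show "bbox ((quarter_turn ^^ Suc n) ` P) = (quarter_turn ^^ Suc n) ` bbox P"
    and "corners ((quarter_turn ^^ Suc n) ` P) = (quarter_turn ^^ Suc n) ` corners P"
    by (simp_all only: funpow.simps image_comp[symmetric] turn Suc.IH)
qed simp_all

section \<open>Angles\<close>

lemma polar_theta: "p = norm p *\<^sub>R (cos (theta p), sin (theta p))"
proof -
  define z where "z = Complex (fst p) (snd p)"
  have z: "z = of_real (cmod z) * cis (Arg2pi z)"
    using Arg2pi[of z] by (simp add: is_Arg_def cis_conv_exp)
  have "Re z = cmod z * cos (Arg2pi z)" "Im z = cmod z * sin (Arg2pi z)"
    using arg_cong[OF z, of Re] arg_cong[OF z, of Im] by simp_all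
  moreover have "cmod z = norm p"
    unfolding z_def by (cases p) (simp add: complex_norm norm_Pair)
  ultimately show ?thesis
    unfolding theta_def by (simp add: z_def prod_eq_iff)
qed

lemma cross_polar: "cross p q = norm p * norm q * sin (theta q - theta p)"
  using polar_theta[of p] polar_theta[of q]
  by (simp add: cross_def sin_diff algebra_simps prod_eq_iff)

lemma cross_nonneg_if_theta_le:
  assumes "p \<in> quadrant k" "q \<in> quadrant k" "theta p \<le> theta q"
  shows "0 \<le> cross p q"
proof -
  have "theta q - theta p \<le> pi"
    using assms(1,2) by (simp add: quadrant_def field_simps)
  thus ?thesis
    using assms(3) sin_ge_zero[of "theta q - theta p"] by (simp add: cross_polar)
qed

lemma cross_pos_if_theta_less:
  assumes "p \<in> quadrant k" "q \<in> quadrant k" "theta p < theta q"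
  shows "0 < cross p q"
proof -
  have "theta q - theta p < pi"
    using assms(1,2) by (simp add: quadrant_def field_simps)
  hence "0 < sin (theta q - theta p)"
    using assms(3) by (intro sin_gt_zero) auto
  moreover have "p \<noteq> 0" "q \<noteq> 0"
    using assms(1,2) by (auto simp: quadrant_def)
  ultimately show ?thesis
    by (simp add: cross_polar)
qed

lemma halfline_scaleR:
  assumes "0 < c"
  shows "halfline (c *\<^sub>R a) = halfline a"
proof -
  have "(\<lambda>t. t * c) ` {0..} = {0..}"
    using assms by (auto simp: image_iff intro!: bexI[of _ "_ / c"])
  hence "(\<lambda>t. t *\<^sub>R a) ` ((\<lambda>t. t * c) ` {0..}) = (\<lambda>t. t *\<^sub>R a) ` {0..}"
    by simp
  thus ?thesis
    unfolding halfline_def by (simp add: image_image)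
qed

lemma ray_theta_eq_halfline:
  assumes "p \<noteq> 0"
  shows "ray (theta p) = halfline p"
proof -
  have "ray (theta p) = halfline (cos (theta p), sin (theta p))"
    by (auto simp: ray_def halfline_def)
  also have "\<dots> = halfline p"
    using halfline_scaleR[of "norm p" "(cos (theta p), sin (theta p))"] polar_theta[of p] assms
    by simp
  finally show ?thesis .
qed

lemma quarter_turns_quadrant:
  assumes "k \<in> {1..4}" "p \<in> quadrant k"
  shows "0 < fst ((quarter_turn ^^ (k - 1)) p) \<and> 0 \<le> snd ((quarter_turn ^^ (k - 1)) p)"
proof -
  define phi where "phi = theta p - real (k - 1) * pi / 2"
  have "0 \<le> phi" "phi < pi / 2"
    using assms by (auto simp: quadrant_def phi_def of_nat_diff field_simps)
  hence "0 < cos phi" "0 \<le> sin phi"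
    by (auto intro: cos_gt_zero_pi sin_ge_zero)
  moreover have "0 < norm p"
    using assms(2) by (simp add: quadrant_def)
  moreover have "(quarter_turn ^^ (k - 1)) p = norm p *\<^sub>R (cos phi, sin phi)"
    unfolding phi_def by (metis polar_theta quarter_turns_polar)
  ultimately show ?thesis
    by simp
qed

section \<open>A finite set of points in the first quadrant\<close>

lemma norm_Pair_le_imp_eq:
  fixes a b x y :: real
  assumes "0 \<le> a" "a \<le> x" "0 \<le> b" "b \<le> y" "norm (x, y) \<le> norm (a, b)"
  shows "x = a \<and> y = b"
proof -
  have "x\<^sup>2 + y\<^sup>2 \<le> a\<^sup>2 + b\<^sup>2"
    using assms(5) by (simp add: norm_Pair)
  moreover have "a\<^sup>2 \<le> x\<^sup>2" "b\<^sup>2 \<le> y\<^sup>2"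
    using assms(1-4) by (auto intro: power_mono)
  ultimately have "x\<^sup>2 = a\<^sup>2" "y\<^sup>2 = b\<^sup>2"
    by linarith+
  thus ?thesis
    using assms(1-4) by (simp add: power2_eq_iff_nonneg)
qed

locale first_quadrant_points =
  fixes P :: "pt set"
  assumes finite: "finite P" and nonempty: "P \<noteq> {}"
    and positive: "\<And>p. p \<in> P \<Longrightarrow> 0 < fst p \<and> 0 \<le> snd p"
begin

lemma xmin_le: "p \<in> P \<Longrightarrow> xmin P \<le> fst p"
  unfolding xmin_def using finite by simp

lemma xmax_ge: "p \<in> P \<Longrightarrow> fst p \<le> xmax P"
  unfolding xmax_def using finite by simp

lemma ymin_le: "p \<in> P \<Longrightarrow> ymin P \<le> snd p"
  unfolding ymin_def using finite by simp

lemma ymax_ge: "p \<in> P \<Longrightarrow> snd p \<le> ymax P"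
  unfolding ymax_def using finite by simp

lemma xmin_attained: "\<exists>p\<in>P. fst p = xmin P"
  unfolding xmin_def using Min_in[of "fst ` P"] finite nonempty by fastforce

lemma xmax_attained: "\<exists>p\<in>P. fst p = xmax P"
  unfolding xmax_def using Max_in[of "fst ` P"] finite nonempty by fastforce

lemma ymin_attained: "\<exists>p\<in>P. snd p = ymin P"
  unfolding ymin_def using Min_in[of "snd ` P"] finite nonempty by fastforce

lemma ymax_attained: "\<exists>p\<in>P. snd p = ymax P"
  unfolding ymax_def using Max_in[of "snd ` P"] finite nonempty by fastforce

lemma xmin_pos: "0 < xmin P"
  using xmin_attained positive by force

lemma ymin_nonneg: "0 \<le> ymin P"
  using ymin_attained positive by force

lemma xmin_le_xmax: "xmin P \<le> xmax P"
  using xmin_attained xmax_ge by force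

lemma ymin_le_ymax: "ymin P \<le> ymax P"
  using ymin_attained ymax_ge by force

lemma zero_notin_bbox: "0 \<notin> bbox P"
  using xmin_pos by (simp add: mem_bbox)

lemma nearest_corner: "is_nearest (corners P) c \<Longrightarrow> c = (xmin P, ymin P)"
  using norm_Pair_le_imp_eq[of "xmin P" "fst c" "ymin P" "snd c"] xmin_pos ymin_nonneg
    xmin_le_xmax ymin_le_ymax
  by (auto simp: is_nearest_def corners_eq_Times)

lemma farthest_corner: "is_farthest (corners P) c \<Longrightarrow> c = (xmax P, ymax P)"
  using norm_Pair_le_imp_eq[of "fst c" "xmax P" "snd c" "ymax P"] xmin_pos ymin_nonneg
    xmin_le_xmax ymin_le_ymax
  by (auto simp: is_farthest_def corners_eq_Times)

lemma dseg_nearest_on_halfline_le: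
  assumes a: "a \<in> P" and c: "is_nearest (halfline a \<inter> frontier (bbox P)) c"
  shows "dseg c e \<le> dseg a e"
proof -
  obtain t where t: "0 \<le> t" "t \<le> 1" "t *\<^sub>R a \<in> frontier (bbox P)"
    using scaleR_in_frontier_below[OF zero_notin_bbox, of 1 a] a subset_bbox[OF finite] by auto
  moreover have "t *\<^sub>R a \<in> halfline a"
    using t by (auto simp: halfline_def)
  ultimately have "norm c \<le> norm (t *\<^sub>R a)"
    using c unfolding is_nearest_def by blast
  moreover obtain s where s: "0 \<le> s" "c = s *\<^sub>R a"
    using c by (auto simp: is_nearest_def halfline_def)
  moreover have "a \<noteq> 0"
    using positive[OF a] by force
  ultimately have "s \<le> 1"
    using t by (simp add: mult_le_cancel_right)
  thus ?thesis
    using s dseg_scaleR_le by simp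
qed

definition exit_scale :: "pt \<Rightarrow> real" where
  "exit_scale p =
     (if snd p * xmax P \<le> ymax P * fst p then xmax P / fst p else ymax P / snd p)"

lemma exit_scale_right:
  assumes "0 < fst p" "snd p * xmax P \<le> ymax P * fst p"
  shows "exit_scale p *\<^sub>R p = (xmax P, snd p * xmax P / fst p)"
  using assms by (simp add: exit_scale_def prod_eq_iff)

lemma exit_scale_top:
  assumes "0 < fst p" "0 \<le> snd p" "\<not> snd p * xmax P \<le> ymax P * fst p"
  shows "0 < snd p" "exit_scale p *\<^sub>R p = (fst p * ymax P / snd p, ymax P)"
proof -
  have "0 \<le> ymax P"
    using ymin_nonneg ymin_le_ymax by linarith
  thus "0 < snd p"
    using assms by (cases "snd p = 0") auto
  thus "exit_scale p *\<^sub>R p = (fst p * ymax P / snd p, ymax P)"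
    using assms(3) by (simp add: exit_scale_def prod_eq_iff)
qed

lemma exit_scale_bbox:
  assumes "p \<in> bbox P" "0 < fst p" "0 \<le> snd p"
  shows "1 \<le> exit_scale p" "exit_scale p *\<^sub>R p \<in> bbox P"
    and "\<And>t. exit_scale p < t \<Longrightarrow> t *\<^sub>R p \<notin> bbox P"
proof -
  have box: "xmin P \<le> fst p" "fst p \<le> xmax P" "ymin P \<le> snd p" "snd p \<le> ymax P"
    using assms(1) by (auto simp: mem_bbox)
  have "1 \<le> exit_scale p \<and> exit_scale p *\<^sub>R p \<in> bbox P
    \<and> (\<forall>t. exit_scale p < t \<longrightarrow> t *\<^sub>R p \<notin> bbox P)"
  proof (cases "snd p * xmax P \<le> ymax P * fst p")
    case True
    have "exit_scale p = xmax P / fst p"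
      using True by (simp add: exit_scale_def)
    moreover have "1 \<le> xmax P / fst p"
      using assms(2) box by simp
    moreover have "snd p * xmax P / fst p \<le> ymax P" "snd p \<le> snd p * xmax P / fst p"
      using True assms(2,3) box mult_right_mono[of "fst p" "xmax P" "snd p"]
      by (auto simp: field_simps)
    moreover have "t *\<^sub>R p \<notin> bbox P" if "xmax P / fst p < t" for t
      using that assms(2) by (simp add: mem_bbox field_simps)
    ultimately show ?thesis
      using exit_scale_right[OF assms(2) True] box xmin_le_xmax by (auto simp: mem_bbox)
  next
    case False
    note top = exit_scale_top[OF assms(2,3) False]
    have "exit_scale p = ymax P / snd p"
      using False by (simp add: exit_scale_def)
    moreover have "1 \<le> ymax P / snd p"
      using top(1) box by simp
    moreover have "fst p * ymax P / snd p \<le> xmax P" "fst p \<le> fst p * ymax P / snd p"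
      using False top(1) box mult_left_mono[of "snd p" "ymax P" "fst p"] assms(2)
      by (auto simp: field_simps)
    moreover have "t *\<^sub>R p \<notin> bbox P" if "ymax P / snd p < t" for t
      using that top(1) by (simp add: mem_bbox field_simps)
    ultimately show ?thesis
      using top(2) box ymin_le_ymax by (auto simp: mem_bbox)
  qed
  thus "1 \<le> exit_scale p" "exit_scale p *\<^sub>R p \<in> bbox P"
    and "\<And>t. exit_scale p < t \<Longrightarrow> t *\<^sub>R p \<notin> bbox P"
    by auto
qed

lemma farthest_on_halfline_eq_exit:
  assumes a: "a \<in> P" and c: "is_farthest (halfline a \<inter> frontier (bbox P)) c"
  shows "c = exit_scale a *\<^sub>R a"
proof -
  have box: "a \<in> bbox P" "0 < fst a" "0 \<le> snd a"
    using a subset_bbox[OF finite] positive by auto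
  note exit = exit_scale_bbox[OF box]
  have "a \<noteq> 0"
    using box by auto
  obtain t where t: "exit_scale a \<le> t" "t *\<^sub>R a \<in> frontier (bbox P)"
    using scaleR_in_frontier_above[OF compact_imp_bounded[OF compact_bbox] \<open>a \<noteq> 0\<close>] exit(1,2)
    by (metis order.trans zero_le_one)
  moreover have "t *\<^sub>R a \<in> halfline a"
    using t exit(1) by (auto simp: halfline_def)
  ultimately have "norm (t *\<^sub>R a) \<le> norm c"
    using c unfolding is_farthest_def by blast
  moreover obtain s where s: "0 \<le> s" "c = s *\<^sub>R a"
    using c by (auto simp: is_farthest_def halfline_def)
  ultimately have "t \<le> s"
    using t exit(1) \<open>a \<noteq> 0\<close> by (simp add: mult_le_cancel_right)
  moreover have "c \<in> bbox P"
    using c frontier_subset_closed[OF compact_imp_closed[OF compact_bbox]]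
    by (auto simp: is_farthest_def)
  hence "s \<le> exit_scale a"
    using exit(3) s by force
  ultimately show ?thesis
    using t s by simp
qed

lemma exit_on_right_edge_segment:
  assumes p: "p \<in> P" and a: "a \<in> P" and "0 \<le> cross a p"
    and right: "snd p * xmax P \<le> ymax P * fst p"
  shows "exit_scale p *\<^sub>R p \<in> closed_segment (exit_scale a *\<^sub>R a) (xmax P, ymax P)"
proof -
  have pos: "0 < fst p" "0 \<le> snd p" "0 < fst a" "0 \<le> snd a" "0 < xmax P"
    using positive[OF p] positive[OF a] xmax_ge[OF p] by auto
  have slope: "snd a / fst a \<le> snd p / fst p"
    using \<open>0 \<le> cross a p\<close> pos by (simp add: cross_def field_simps)
  also have "\<dots> \<le> ymax P / xmax P"
    using right pos by (simp add: field_simps)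
  finally have "snd a * xmax P \<le> ymax P * fst a"
    using pos by (simp add: field_simps)
  moreover have "snd a * xmax P / fst a \<le> snd p * xmax P / fst p"
    using mult_right_mono[OF slope, of "xmax P"] pos by (simp add: field_simps)
  moreover have "snd p * xmax P / fst p \<le> ymax P"
    using right pos by (simp add: field_simps)
  ultimately show ?thesis
    using exit_scale_right[OF pos(1) right] exit_scale_right[OF pos(3)]
    by (simp add: Pair_in_closed_segment_snd closed_segment_eq_real_ivl)
qed

lemma exit_on_top_edge_segment:
  assumes p: "p \<in> P" and b: "b \<in> P" and "0 \<le> cross p b"
    and top: "\<not> snd p * xmax P \<le> ymax P * fst p"
  shows "exit_scale p *\<^sub>R p \<in> closed_segment (exit_scale b *\<^sub>R b) (xmax P, ymax P)"
proof -
  have pos: "0 < fst p" "0 \<le> snd p" "0 < fst b" "0 \<le> snd b"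
    using positive[OF p] positive[OF b] by auto
  note exit_p = exit_scale_top[OF pos(1,2) top]
  have "0 < snd b"
  proof (rule ccontr)
    assume "\<not> 0 < snd b"
    hence "snd p * fst b \<le> 0"
      using \<open>0 \<le> cross p b\<close> pos by (simp add: cross_def)
    thus False
      using exit_p(1) pos by (simp add: mult_le_0_iff)
  qed
  have "0 < ymax P"
    using ymax_ge[OF p] exit_p(1) by linarith
  have slope: "fst b / snd b \<le> fst p / snd p"
    using \<open>0 \<le> cross p b\<close> \<open>0 < snd b\<close> exit_p(1) by (simp add: cross_def field_simps)
  also have "\<dots> < xmax P / ymax P"
    using top exit_p(1) \<open>0 < ymax P\<close> by (simp add: field_simps)
  finally have "\<not> snd b * xmax P \<le> ymax P * fst b"
    using \<open>0 < snd b\<close> \<open>0 < ymax P\<close> by (simp add: field_simps)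
  note exit_b = exit_scale_top[OF pos(3,4) this]
  have "fst b * ymax P / snd b \<le> fst p * ymax P / snd p"
    using mult_right_mono[OF slope, of "ymax P"] \<open>0 < ymax P\<close> exit_p(1) \<open>0 < snd b\<close>
    by (simp add: field_simps)
  moreover have "fst p * ymax P / snd p \<le> xmax P"
    using top exit_p(1) by (simp add: field_simps)
  ultimately show ?thesis
    using exit_p(2) exit_b(2)
    by (simp add: Pair_in_closed_segment_fst closed_segment_eq_real_ivl)
qed

lemma dseg_le_exit_points:
  assumes p: "p \<in> P" and a: "a \<in> P" and b: "b \<in> P"
    and "0 \<le> cross a p" "0 \<le> cross p b"
  shows "dseg p e \<le> max (dseg (exit_scale a *\<^sub>R a) e)
                         (max (dseg (exit_scale b *\<^sub>R b) e) (dseg (xmax P, ymax P) e))"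
proof -
  have box: "p \<in> bbox P" "0 < fst p" "0 \<le> snd p"
    using p subset_bbox[OF finite] positive by auto
  note exit = exit_scale_bbox[OF box]
  have "dseg p e = dseg ((1 / exit_scale p) *\<^sub>R (exit_scale p *\<^sub>R p)) e"
    using exit(1) by simp
  also have "\<dots> \<le> dseg (exit_scale p *\<^sub>R p) e"
    using exit(1) by (intro dseg_scaleR_le) auto
  also have "\<dots> \<le> max (dseg (exit_scale a *\<^sub>R a) e)
                      (max (dseg (exit_scale b *\<^sub>R b) e) (dseg (xmax P, ymax P) e))"
    using dseg_closed_segment_le_max[OF exit_on_right_edge_segment[OF p a], of e]
      dseg_closed_segment_le_max[OF exit_on_top_edge_segment[OF p b], of e] assms(4,5)
    by (cases "snd p * xmax P \<le> ymax P * fst p") fastforce+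
  finally show ?thesis .
qed

lemma near_corner_dominated:
  assumes e: "0 \<le> fst e" "0 \<le> snd e"
    and side: "(\<forall>p\<in>P. 0 < cross p e) \<or> (\<forall>p\<in>P. 0 < cross e p)"
  shows "\<exists>q\<in>P. dseg (xmin P, ymin P) e \<le> dseg q e"
  using side
proof
  assume ccw: "\<forall>p\<in>P. 0 < cross p e"
  obtain q where q: "q \<in> P" "snd q = ymin P"
    using ymin_attained by blast
  obtain r where r: "r \<in> P" "fst r = xmin P"
    using xmin_attained by blast
  have "ymin P * fst e \<le> snd r * fst e"
    using ymin_le[OF r(1)] e by (simp add: mult_right_mono)
  hence "0 < cross (xmin P, ymin P) (fst e, snd e)"
    using ccw r by (force simp: cross_def)
  hence "dseg (xmin P, ymin P) (fst e, snd e) \<le> dseg (fst q, ymin P) (fst e, snd e)"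
    by (intro dseg_le_slide_right) (use e ymin_nonneg xmin_le[OF q(1)] in auto)
  thus ?thesis
    using q by (metis prod.collapse)
next
  assume cw: "\<forall>p\<in>P. 0 < cross e p"
  obtain q where q: "q \<in> P" "fst q = xmin P"
    using xmin_attained by blast
  obtain r where r: "r \<in> P" "snd r = ymin P"
    using ymin_attained by blast
  have "snd e * xmin P \<le> snd e * fst r"
    using xmin_le[OF r(1)] e by (simp add: mult_left_mono)
  hence "0 < cross (ymin P, xmin P) (snd e, fst e)"
    using cw r by (force simp: cross_def mult.commute)
  hence "dseg (ymin P, xmin P) (snd e, fst e) \<le> dseg (snd q, xmin P) (snd e, fst e)"
    by (intro dseg_le_slide_right) (use e xmin_pos ymin_le[OF q(1)] in auto)
  thus ?thesis
    using q dseg_swap[of "(xmin P, ymin P)" e] dseg_swap[of q e] by (auto simp: prod.swap_def)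
qed

lemma far_corner_dominated:
  assumes e: "0 \<le> fst e" "0 \<le> snd e" "norm (xmax P, ymax P) \<le> norm e"
    and side: "(\<forall>p\<in>P. 0 < cross p e) \<or> (\<forall>p\<in>P. 0 < cross e p)"
  shows "\<exists>q\<in>P. dseg (xmax P, ymax P) e \<le> dseg q e"
proof -
  have inside: "(xmax P)\<^sup>2 + (ymax P)\<^sup>2 \<le> (fst e)\<^sup>2 + (snd e)\<^sup>2"
    using e(3) by (cases e) (simp add: norm_Pair)
  have "0 \<le> ymax P"
    using ymin_nonneg ymin_le_ymax by linarith
  show ?thesis
    using side
  proof
    assume ccw: "\<forall>p\<in>P. 0 < cross p e"
    obtain q where q: "q \<in> P" "fst q = xmax P"
      using xmax_attained by blast
    obtain r where r: "r \<in> P" "snd r = ymax P"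
      using ymax_attained by blast
    have "fst r * snd e \<le> xmax P * snd e"
      using xmax_ge[OF r(1)] e by (simp add: mult_right_mono)
    hence "0 < cross (xmax P, ymax P) (fst e, snd e)"
      using ccw r by (force simp: cross_def)
    hence "dseg (xmax P, ymax P) (fst e, snd e) \<le> dseg (xmax P, snd q) (fst e, snd e)"
      by (intro dseg_le_slide_down)
         (use e inside ymax_ge[OF q(1)] xmin_pos xmin_le_xmax in auto)
    thus ?thesis
      using q by (metis prod.collapse)
  next
    assume cw: "\<forall>p\<in>P. 0 < cross e p"
    obtain q where q: "q \<in> P" "snd q = ymax P"
      using ymax_attained by blast
    obtain r where r: "r \<in> P" "fst r = xmax P"
      using xmax_attained by blast
    have "fst e * snd r \<le> fst e * ymax P"
      using ymax_ge[OF r(1)] e by (simp add: mult_left_mono)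
    hence "0 < cross (ymax P, xmax P) (snd e, fst e)"
      using cw r by (force simp: cross_def mult.commute)
    hence "dseg (ymax P, xmax P) (snd e, fst e) \<le> dseg (ymax P, fst q) (snd e, fst e)"
      by (intro dseg_le_slide_down)
         (use e inside xmax_ge[OF q(1)] \<open>0 \<le> ymax P\<close> in \<open>auto simp: add.commute\<close>)
    thus ?thesis
      using q dseg_swap[of "(xmax P, ymax P)" e] dseg_swap[of q e] by (auto simp: prod.swap_def)
  qed
qed

lemma distance_bounds:
  assumes e: "0 \<le> fst e" "0 \<le> snd e"
    and a: "a \<in> P" "\<forall>p\<in>P. 0 \<le> cross a p" and b: "b \<in> P" "\<forall>p\<in>P. 0 \<le> cross p b"
    and side: "(\<forall>p\<in>P. 0 < cross p e) \<or> (\<forall>p\<in>P. 0 < cross e p)"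
    and L1: "is_nearest (halfline a \<inter> frontier (bbox P)) L1"
    and L2: "is_farthest (halfline a \<inter> frontier (bbox P)) L2"
    and U1: "is_nearest (halfline b \<inter> frontier (bbox P)) U1"
    and U2: "is_farthest (halfline b \<inter> frontier (bbox P)) U2"
    and CN: "is_nearest (corners P) CN" and CF: "is_farthest (corners P) CF"
  shows "Max ((\<lambda>p. dseg p e) ` P) \<ge>
           max (min (dseg L1 e) (dseg L2 e))
             (max (min (dseg U1 e) (dseg U2 e))
                  (if norm e < norm CF then dseg CN e else dseg CF e))
       \<and> Max ((\<lambda>p. dseg p e) ` P) \<le>
           max (dseg L1 e) (max (dseg L2 e) (max (dseg U1 e)
             (max (dseg U2 e) (dseg CF e))))"
proof -
  define M where "M = Max ((\<lambda>p. dseg p e) ` P)"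
  have le_M: "dseg q e \<le> M" if "q \<in> P" for q
    unfolding M_def using finite that by simp
  have "min (dseg L1 e) (dseg L2 e) \<le> M" "min (dseg U1 e) (dseg U2 e) \<le> M"
    using dseg_nearest_on_halfline_le[OF a(1) L1, of e] dseg_nearest_on_halfline_le[OF b(1) U1, of e]
      le_M[OF a(1)] le_M[OF b(1)] by linarith+
  moreover have "(if norm e < norm CF then dseg CN e else dseg CF e) \<le> M"
  proof (cases "norm e < norm CF")
    case True
    then show ?thesis
      using near_corner_dominated[OF e side] le_M nearest_corner[OF CN] by force
  next
    case False
    hence far: "norm (xmax P, ymax P) \<le> norm e"
      using farthest_corner[OF CF] by simp
    show ?thesis
      using far_corner_dominated[OF e far side] le_M farthest_corner[OF CF] False by force
  qed
  moreover have "dseg p e \<le> max (dseg L2 e) (max (dseg U2 e) (dseg CF e))" if "p \<in> P" for p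
    using dseg_le_exit_points[OF that a(1) b(1)] a(2) b(2) that
      farthest_on_halfline_eq_exit[OF a(1) L2] farthest_on_halfline_eq_exit[OF b(1) U2]
      farthest_corner[OF CF] by simp
  hence "M \<le> max (dseg L2 e) (max (dseg U2 e) (dseg CF e))"
    unfolding M_def using finite nonempty by simp
  ultimately show ?thesis
    unfolding M_def by auto
qed

end

section \<open>Reduction to the first quadrant\<close>

lemma bounding_ray_points_isometry_image:
  assumes T: "linear T" "\<And>x. norm (T x) = norm x" and box: "bbox (T ` P) = T ` bbox P"
    and P: "finite P" "c \<in> P" "0 \<notin> bbox P"
  shows "is_nearest (halfline (T c) \<inter> frontier (bbox (T ` P)))
           (T (nearest (ray (theta c) \<inter> frontier (bbox P))))"
    and "is_farthest (halfline (T c) \<inter> frontier (bbox (T ` P)))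
           (T (farthest (ray (theta c) \<inter> frontier (bbox P))))"
proof -
  let ?K = "halfline c \<inter> frontier (bbox P)"
  have "c \<in> bbox P"
    using subset_bbox[OF P(1)] P(2) by auto
  hence "c \<noteq> 0"
    using P(3) by auto
  hence "compact ?K"
    by (intro closed_Int_compact closed_halfline compact_frontier compact_bbox)
  moreover obtain t where "0 \<le> t" "t *\<^sub>R c \<in> frontier (bbox P)"
    using scaleR_in_frontier_below[OF P(3), of 1 c] \<open>c \<in> bbox P\<close> by (metis scaleR_one zero_le_one)
  hence "?K \<noteq> {}"
    by (auto simp: halfline_def)
  moreover have "halfline (T c) \<inter> frontier (bbox (T ` P)) = T ` ?K"
    using box halfline_linear_image[OF T(1)] frontier_linear_isometry_image[OF T]
      image_Int[OF inj_linear_isometry[OF T]] by simp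
  ultimately show "is_nearest (halfline (T c) \<inter> frontier (bbox (T ` P)))
           (T (nearest (ray (theta c) \<inter> frontier (bbox P))))"
    and "is_farthest (halfline (T c) \<inter> frontier (bbox (T ` P)))
           (T (farthest (ray (theta c) \<inter> frontier (bbox P))))"
    using is_nearest_isometry_image[OF T(2) is_nearest_nearest]
      is_farthest_isometry_image[OF T(2) is_farthest_farthest]
    by (simp_all add: ray_theta_eq_halfline[OF \<open>c \<noteq> 0\<close>])
qed

lemma corner_points_isometry_image:
  assumes "\<And>x. norm (T x) = norm x" "corners (T ` P) = T ` corners P"
  shows "is_nearest (corners (T ` P)) (T (c_n P))" "is_farthest (corners (T ` P)) (T (c_f P))"
proof -
  have "compact (corners P)" "corners P \<noteq> {}"
    by (auto simp: corners_def intro!: finite_imp_compact)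
  thus "is_nearest (corners (T ` P)) (T (c_n P))" "is_farthest (corners (T ` P)) (T (c_f P))"
    unfolding c_n_def c_f_def assms(2)
    by (auto intro: is_nearest_isometry_image[OF assms(1)] is_farthest_isometry_image[OF assms(1)]
        is_nearest_nearest is_farthest_farthest)
qed

lemma theta_lb_le: "finite P \<Longrightarrow> p \<in> P \<Longrightarrow> theta_lb P \<le> theta p"
  unfolding theta_lb_def by simp

lemma theta_ub_ge: "finite P \<Longrightarrow> p \<in> P \<Longrightarrow> theta p \<le> theta_ub P"
  unfolding theta_ub_def by simp

lemma theta_lb_attained: "finite P \<Longrightarrow> P \<noteq> {} \<Longrightarrow> \<exists>a\<in>P. theta a = theta_lb P"
  unfolding theta_lb_def using Min_in[of "theta ` P"] by fastforce

lemma theta_ub_attained: "finite P \<Longrightarrow> P \<noteq> {} \<Longrightarrow> \<exists>b\<in>P. theta b = theta_ub P"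
  unfolding theta_ub_def using Max_in[of "theta ` P"] by fastforce

lemma cross_nonneg_bounding_points:
  assumes "finite P" "P \<subseteq> quadrant k" "p \<in> P"
    and "a \<in> P" "theta a = theta_lb P" "b \<in> P" "theta b = theta_ub P"
  shows "0 \<le> cross a p" "0 \<le> cross p b"
  using assms theta_lb_le[OF assms(1,3)] theta_ub_ge[OF assms(1,3)]
  by (metis cross_nonneg_if_theta_le subsetD)+

lemma cross_sign_outside_bounding_rays:
  assumes "finite P" "P \<subseteq> quadrant k" "e \<in> quadrant k"
    and "theta e > theta_ub P \<or> theta e < theta_lb P"
  shows "(\<forall>p\<in>P. 0 < cross p e) \<or> (\<forall>p\<in>P. 0 < cross e p)"
  using assms(4)
proof
  assume "theta_ub P < theta e"
  hence "0 < cross p e" if "p \<in> P" for p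
    using that theta_ub_ge[OF assms(1) that] assms(2,3)
    by (metis cross_pos_if_theta_less le_less_trans subsetD)
  thus ?thesis
    by blast
next
  assume "theta e < theta_lb P"
  hence "0 < cross e p" if "p \<in> P" for p
    using that theta_lb_le[OF assms(1) that] assms(2,3)
    by (metis cross_pos_if_theta_less less_le_trans subsetD)
  thus ?thesis
    by blast
qed

theorem theorem4:
  fixes P :: "pt set" and e :: pt and k :: nat
  assumes "k \<in> {1..4}"
    and "finite P" and "P \<noteq> {}" and "P \<subseteq> quadrant k"
    and "e \<noteq> 0" and "e \<in> quadrant k"
    and "theta e > theta_ub P \<or> theta e < theta_lb P"
  shows "Max ((\<lambda>p. dseg p e) ` P) \<ge>
           max (min (dseg (l1 P) e) (dseg (l2 P) e))
             (max (min (dseg (u1 P) e) (dseg (u2 P) e))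
                  (if norm e < norm (c_f P) then dseg (c_n P) e else dseg (c_f P) e))
       \<and> Max ((\<lambda>p. dseg p e) ` P) \<le>
           max (dseg (l1 P) e) (max (dseg (l2 P) e) (max (dseg (u1 P) e)
             (max (dseg (u2 P) e) (dseg (c_f P) e))))"
proof -
  define T where "T = quarter_turn ^^ (k - 1)"
  have T: "linear T" "\<And>x. norm (T x) = norm x" "\<And>p q. cross (T p) (T q) = cross p q"
    unfolding T_def by (rule quarter_turns_linear_isometry)+
  have box: "bbox (T ` P) = T ` bbox P" "corners (T ` P) = T ` corners P"
    unfolding T_def using bbox_quarter_turns_image[OF assms(2,3)] by auto
  interpret Q: first_quadrant_points "T ` P"
    using assms(2-4) quarter_turns_quadrant[OF assms(1)] by unfold_locales (auto simp: T_def)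
  have "0 \<notin> bbox P"
    using Q.zero_notin_bbox box(1) linear_0[OF T(1)] by force
  obtain a b where a: "a \<in> P" "theta a = theta_lb P" and b: "b \<in> P" "theta b = theta_ub P"
    using theta_lb_attained theta_ub_attained assms(2,3) by metis
  note L = bounding_ray_points_isometry_image[OF T(1,2) box(1) assms(2) a(1) \<open>0 \<notin> bbox P\<close>]
  note U = bounding_ray_points_isometry_image[OF T(1,2) box(1) assms(2) b(1) \<open>0 \<notin> bbox P\<close>]
  have a': "T a \<in> T ` P" "\<forall>p\<in>T ` P. 0 \<le> cross (T a) p"
    and b': "T b \<in> T ` P" "\<forall>p\<in>T ` P. 0 \<le> cross p (T b)"
    using a b cross_nonneg_bounding_points[OF assms(2,4) _ a b] by (auto simp: T(3))
  have side: "(\<forall>p\<in>T ` P. 0 < cross p (T e)) \<or> (\<forall>p\<in>T ` P. 0 < cross (T e) p)"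
    using cross_sign_outside_bounding_rays[OF assms(2,4,6,7)] by (simp add: T(3))
  have e': "0 \<le> fst (T e)" "0 \<le> snd (T e)"
    using quarter_turns_quadrant[OF assms(1,6)] by (auto simp: T_def)
  have D: "dseg (T p) (T e) = dseg p e" for p
    by (rule dseg_linear_isometry[OF T(1,2)])
  have M: "(\<lambda>p. dseg p (T e)) ` T ` P = (\<lambda>p. dseg p e) ` P"
    by (simp add: image_image D)
  show ?thesis
    using Q.distance_bounds[OF e' a' b' side L U corner_points_isometry_image[OF T(2) box(2)]]
    unfolding M D T(2) l1_def l2_def u1_def u2_def a(2)[symmetric] b(2)[symmetric] .
qed

end
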